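(* Let $D$ be the minimal Dress ring of $\mathbb{R}(X)$. Then: (1) for all $a,b\in D$ with $aD+bD=D$, the element $a^2+b^2$ is a unit of $D$ (so $D$ has square stable range one); (2) for $a=X/(1+X^2)$ and $b=(X^2-1)/(1+X^2)$ one has $a,b\in D$ and $aD+bD=D$, but $a+bz$ is not a unit of $D$ for any $z\in D$ (so $D$ does not have $1$ in the stable range).
   Context: $D$ denotes the minimal Dress ring of the field $\mathbb{R}(X)$, i.e. the subring of $\mathbb{R}(X)$ generated by $\mathbb{Z}$ and all elements $1/(1+h^2)$ with $h\in\mathbb{R}(X)$. *)

theory Defs
  imports "HOL-Computational_Algebra.Polynomial" "HOL-Computational_Algebra.Fraction_Field"
begin

type_synonym ratfun = "real poly fract"

definition X :: ratfun where
  "X = Fract [:0, 1:] 1"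

inductive_set dress_min :: "ratfun set" where
  int_mem: "of_int k \<in> dress_min"
| gen_mem: "1 / (1 + h\<^sup>2) \<in> dress_min"
| add_mem: "a \<in> dress_min \<Longrightarrow> b \<in> dress_min \<Longrightarrow> a + b \<in> dress_min"
| neg_mem: "a \<in> dress_min \<Longrightarrow> - a \<in> dress_min"
| mult_mem: "a \<in> dress_min \<Longrightarrow> b \<in> dress_min \<Longrightarrow> a * b \<in> dress_min"

definition unit_in :: "'a::comm_ring_1 set \<Rightarrow> 'a \<Rightarrow> bool" where
  "unit_in R u \<longleftrightarrow> u \<in> R \<and> (\<exists>v\<in>R. u * v = 1)"

definition ideal2 :: "'a::comm_ring_1 set \<Rightarrow> 'a \<Rightarrow> 'a \<Rightarrow> 'a set" where
  "ideal2 R a b = {a * x + b * y | x y. x \<in> R \<and> y \<in> R}"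

end

theory Submission
  imports Defs "HOL-Computational_Algebra.Polynomial_Factorial"
    "HOL-Computational_Algebra.Field_as_Ring"
begin

text \<open>Part (1): if \<open>a x + b y = 1\<close>, then with \<open>h = a y - b x\<close> the Brahmagupta identity gives
  \<open>(a\<^sup>2 + b\<^sup>2)(x\<^sup>2 + y\<^sup>2) = 1 + h\<^sup>2\<close>, and \<open>1/(1 + h\<^sup>2)\<close> lies in \<open>D\<close>, so \<open>a\<^sup>2 + b\<^sup>2\<close> is a unit.

  Part (2): every element of \<open>D\<close> is a quotient of real polynomials whose denominator has no
  real root, so it is a continuous function on \<open>\<real>\<close>; a unit of \<open>D\<close> has an inverse of the same
  kind and hence no real zero, so it cannot change sign. But \<open>a + b z\<close> takes the value \<open>1/2\<close>
  at \<open>1\<close> and \<open>-1/2\<close> at \<open>-1\<close>, whatever \<open>z \<in> D\<close> is.\<close>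

lemma fract_coprime_rep:
  fixes h :: ratfun
  obtains p q where "h = Fract p q" "q \<noteq> 0" "\<And>t. poly p t = 0 \<Longrightarrow> poly q t \<noteq> 0"
proof -
  obtain p0 q0 where h: "h = Fract p0 q0" "q0 \<noteq> 0" by (cases h) auto
  define g where "g = gcd p0 q0"
  have g0: "g \<noteq> 0" using h(2) by (simp add: g_def)
  obtain p where p: "p0 = g * p" unfolding g_def by (metis gcd_dvd1 dvdE)
  obtain q where q: "q0 = g * q" unfolding g_def by (metis gcd_dvd2 dvdE)
  have "coprime p q"
  proof -
    have "p = p0 div g" "q = q0 div g" using p q g0 by auto
    then show ?thesis using div_gcd_coprime[of p0 q0] h(2) by (simp add: g_def)
  qed
  have "poly q t \<noteq> 0" if "poly p t = 0" for t
  proof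
    assume "poly q t = 0"
    then have "[:-t, 1:] dvd q" "[:-t, 1:] dvd p" using that by (metis poly_eq_0_iff_dvd)+
    with \<open>coprime p q\<close> have "is_unit [:-t, 1:]" using coprime_common_divisor by blast
    then show False by (simp add: is_unit_iff_degree)
  qed
  moreover have "h = Fract p q" using h p q g0 by (simp add: mult_fract_cancel)
  moreover have "q \<noteq> 0" using h(2) q by auto
  ultimately show ?thesis using that by blast
qed

lemma one_plus_square_nonzero: "1 + (h::ratfun)\<^sup>2 \<noteq> 0"
proof -
  obtain p q where h: "h = Fract p q" "q \<noteq> 0" "\<And>t. poly p t = 0 \<Longrightarrow> poly q t \<noteq> 0"
    using fract_coprime_rep[of h] by blast
  have "poly (q * q + p * p) 0 \<noteq> 0"
    using h(3)[of 0] by (auto simp add: sum_squares_eq_zero_iff)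
  then have "q * q + p * p \<noteq> 0" by (metis poly_0)
  then show ?thesis
    using h(2) by (simp add: h power2_eq_square One_fract_def Zero_fract_def eq_fract algebra_simps)
qed

lemma dress_min_one: "1 \<in> dress_min"
  using dress_min.int_mem[of 1] by simp

lemma dress_min_diff: "a \<in> dress_min \<Longrightarrow> b \<in> dress_min \<Longrightarrow> a - b \<in> dress_min"
  by (metis diff_conv_add_uminus dress_min.add_mem dress_min.neg_mem)

lemma dress_min_unimodular_sum_squares_unit:
  assumes a: "a \<in> dress_min" and b: "b \<in> dress_min" and I: "ideal2 dress_min a b = dress_min"
  shows "unit_in dress_min (a\<^sup>2 + b\<^sup>2)"
proof -
  have "1 \<in> ideal2 dress_min a b" using I dress_min_one by simp
  then obtain x y where x: "x \<in> dress_min" and y: "y \<in> dress_min" and xy: "a * x + b * y = 1"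
    unfolding ideal2_def by auto
  define h where "h = a * y - b * x"
  have "(a\<^sup>2 + b\<^sup>2) * (x * x + y * y) = (a * x + b * y)\<^sup>2 + h\<^sup>2"
    by (simp add: h_def power2_eq_square algebra_simps)
  then have "(a\<^sup>2 + b\<^sup>2) * ((x * x + y * y) * (1 / (1 + h\<^sup>2))) = 1"
    using xy one_plus_square_nonzero[of h] by simp
  moreover have "h \<in> dress_min"
    unfolding h_def using a b x y by (intro dress_min_diff dress_min.mult_mem)
  then have "(x * x + y * y) * (1 / (1 + h\<^sup>2)) \<in> dress_min"
    using x y by (intro dress_min.mult_mem dress_min.add_mem dress_min.gen_mem)
  moreover have "a\<^sup>2 + b\<^sup>2 \<in> dress_min"
    unfolding power2_eq_square using a b by (intro dress_min.mult_mem dress_min.add_mem)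
  ultimately show ?thesis unfolding unit_in_def by blast
qed

definition pole_free :: "ratfun \<Rightarrow> bool" where
  "pole_free f \<longleftrightarrow> (\<exists>p q. f = Fract p q \<and> (\<forall>t. poly q t \<noteq> 0))"

lemma pole_free_int: "pole_free (of_int k)"
proof -
  have "(of_int k :: ratfun) = Fract (of_int k) 1"
    by (cases k rule: int_cases) (simp_all add: of_nat_fract minus_fract del: of_nat_Suc)
  then show ?thesis unfolding pole_free_def by (intro exI[of _ "of_int k"] exI[of _ 1]) simp
qed

lemma pole_free_inverse_one_plus_square: "pole_free (1 / (1 + h\<^sup>2))"
proof -
  obtain p q where h: "h = Fract p q" "q \<noteq> 0" "\<And>t. poly p t = 0 \<Longrightarrow> poly q t \<noteq> 0"
    using fract_coprime_rep[of h] by blast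
  have ne: "poly (q * q + p * p) t \<noteq> 0" for t
    using h(3)[of t] by (auto simp add: sum_squares_eq_zero_iff)
  then have "q * q + p * p \<noteq> 0" by (metis poly_0)
  then have "1 / (1 + h\<^sup>2) = Fract (q * q) (q * q + p * p)"
    using h(2) by (simp add: h power2_eq_square One_fract_def divide_fract_def algebra_simps)
  then show ?thesis unfolding pole_free_def using ne by blast
qed

lemma pole_free_add: "pole_free a \<Longrightarrow> pole_free b \<Longrightarrow> pole_free (a + b)"
  unfolding pole_free_def
  by (clarsimp, metis add_fract mult_eq_0_iff poly_0 poly_mult)

lemma pole_free_minus: "pole_free a \<Longrightarrow> pole_free (- a)"
  unfolding pole_free_def by (metis minus_fract)

lemma pole_free_mult: "pole_free a \<Longrightarrow> pole_free b \<Longrightarrow> pole_free (a * b)"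
  unfolding pole_free_def by (clarsimp, metis mult_eq_0_iff poly_mult mult_fract)

lemma dress_min_pole_free: "f \<in> dress_min \<Longrightarrow> pole_free f"
  by (induction rule: dress_min.induct)
    (auto intro: pole_free_int pole_free_inverse_one_plus_square pole_free_add
      pole_free_minus pole_free_mult)

lemma poly_nowhere_zero_same_sign:
  fixes p :: "real poly"
  assumes "\<And>x. poly p x \<noteq> 0"
  shows "0 < poly p s * poly p t"
proof (rule ccontr)
  assume "\<not> 0 < poly p s * poly p t"
  then have "poly p s * poly p t < 0" "poly p t * poly p s < 0"
    using assms[of s] assms[of t] by (auto simp add: not_less order.order_iff_strict mult.commute)
  moreover have "s \<noteq> t" using calculation by auto
  ultimately show False
    using poly_IVT[of s t p] poly_IVT[of t s p] assms by (metis linorder_neq_iff)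
qed

lemma fract_eq_poly_sign:
  assumes "Fract p q = Fract n d" "q \<noteq> 0" "d \<noteq> 0"
  shows "poly (p * q) t * (poly d t)\<^sup>2 = poly (n * d) t * (poly q t)\<^sup>2"
proof -
  have "poly p t * poly d t = poly n t * poly q t"
    using assms by (simp add: eq_fract flip: poly_mult)
  then show ?thesis by (simp add: power2_eq_square)
qed

lemma dress_min_unit_sign_constant:
  assumes "unit_in dress_min (Fract n d)" "d \<noteq> 0" "poly d s \<noteq> 0" "poly d t \<noteq> 0"
  shows "0 < poly (n * d) s * poly (n * d) t"
proof -
  obtain v where "Fract n d \<in> dress_min" "v \<in> dress_min" "Fract n d * v = 1"
    using assms(1) unfolding unit_in_def by blast
  then obtain p q r w where pq: "Fract n d = Fract p q" "\<forall>x. poly q x \<noteq> 0"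
    and rw: "v = Fract r w" "\<forall>x. poly w x \<noteq> 0" and "Fract p q * Fract r w = 1"
    using dress_min_pole_free unfolding pole_free_def by metis
  moreover have "q \<noteq> 0" "w \<noteq> 0" using pq(2) rw(2) by (metis poly_0)+
  ultimately have "p * r = q * w"
    by (simp add: One_fract_def eq_fract)
  then have "poly (p * q) x \<noteq> 0" for x
    using pq(2) rw(2) by (metis mult_eq_0_iff poly_mult)
  then have "0 < poly (p * q) s * poly (p * q) t"
    by (rule poly_nowhere_zero_same_sign)
  have sq: "poly (p * q) x * (poly d x)\<^sup>2 = poly (n * d) x * (poly q x)\<^sup>2" for x
    using fract_eq_poly_sign[OF pq(1)[symmetric] \<open>q \<noteq> 0\<close> assms(2)] .
  have "0 < poly (p * q) s * poly (p * q) t * ((poly d s)\<^sup>2 * (poly d t)\<^sup>2)"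
    using \<open>0 < poly (p * q) s * poly (p * q) t\<close> assms(3,4) by simp
  also have "\<dots> = (poly (p * q) s * (poly d s)\<^sup>2) * (poly (p * q) t * (poly d t)\<^sup>2)"
    by (simp only: ac_simps)
  also have "\<dots> = poly (n * d) s * poly (n * d) t * ((poly q s)\<^sup>2 * (poly q t)\<^sup>2)"
    unfolding sq by (simp only: ac_simps)
  finally have "0 < poly (n * d) s * poly (n * d) t * ((poly q s)\<^sup>2 * (poly q t)\<^sup>2)" .
  moreover have "0 < (poly q s)\<^sup>2 * (poly q t)\<^sup>2" using pq(2) by simp
  ultimately show ?thesis by (rule zero_less_mult_pos2)
qed

lemma numeral_fract: "(numeral n :: 'a::idom fract) = Fract (numeral n) 1"
  by (metis of_nat_fract of_nat_numeral)

lemmas fract_poly_simps = X_def power2_eq_square One_fract_def eq_fract one_pCons numeral_poly numeral_fract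

lemma X_over_one_plus_X_square: "X / (1 + X\<^sup>2) = Fract [:0, 1:] [:1, 0, 1:]"
  by (simp add: fract_poly_simps)

lemma X_square_minus_one_over_one_plus_X_square:
  "(X\<^sup>2 - 1) / (1 + X\<^sup>2) = Fract [:-1, 0, 1:] [:1, 0, 1:]"
  by (simp add: fract_poly_simps)

lemma X_over_one_plus_X_square_in_dress_min: "X / (1 + X\<^sup>2) \<in> dress_min"
proof -
  have "X / (1 + X\<^sup>2) = 1 / (1 + ((X - 1) / (X + 1))\<^sup>2) - 1 / (1 + 1\<^sup>2)"
    by (simp add: fract_poly_simps)
  then show ?thesis by (simp only: dress_min_diff dress_min.gen_mem)
qed

lemma X_square_minus_one_over_one_plus_X_square_in_dress_min:
  "(X\<^sup>2 - 1) / (1 + X\<^sup>2) \<in> dress_min"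
proof -
  have "(X\<^sup>2 - 1) / (1 + X\<^sup>2) = 1 - (1 / (1 + X\<^sup>2) + 1 / (1 + X\<^sup>2))"
    by (simp add: fract_poly_simps)
  then show ?thesis by (simp only: dress_min_diff dress_min_one dress_min.add_mem dress_min.gen_mem)
qed

lemma ideal2_dress_min_eqI:
  assumes "a \<in> dress_min" "b \<in> dress_min" "x \<in> dress_min" "y \<in> dress_min" "a * x + b * y = 1"
  shows "ideal2 dress_min a b = dress_min"
proof
  show "ideal2 dress_min a b \<subseteq> dress_min"
    unfolding ideal2_def using assms(1,2) by (auto intro: dress_min.add_mem dress_min.mult_mem)
  show "dress_min \<subseteq> ideal2 dress_min a b"
  proof
    fix f assume "f \<in> dress_min"
    have "f = (a * x + b * y) * f" using assms(5) by simp
    also have "\<dots> = a * (x * f) + b * (y * f)" by (simp add: algebra_simps)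
    finally have "f = a * (x * f) + b * (y * f)" .
    moreover have "x * f \<in> dress_min" "y * f \<in> dress_min"
      using assms(3,4) \<open>f \<in> dress_min\<close> by (simp_all add: dress_min.mult_mem)
    ultimately show "f \<in> ideal2 dress_min a b"
      unfolding ideal2_def by blast
  qed
qed

lemma witness_ideal2_eq_dress_min:
  "ideal2 dress_min (X / (1 + X\<^sup>2)) ((X\<^sup>2 - 1) / (1 + X\<^sup>2)) = dress_min"
proof (rule ideal2_dress_min_eqI)
  show "4 * (X / (1 + X\<^sup>2)) \<in> dress_min"
    using dress_min.int_mem[of 4] X_over_one_plus_X_square_in_dress_min
    by (metis dress_min.mult_mem of_int_numeral)
  show "X / (1 + X\<^sup>2) * (4 * (X / (1 + X\<^sup>2)))
      + (X\<^sup>2 - 1) / (1 + X\<^sup>2) * ((X\<^sup>2 - 1) / (1 + X\<^sup>2)) = 1"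
    unfolding X_over_one_plus_X_square X_square_minus_one_over_one_plus_X_square
    by (simp add: One_fract_def numeral_fract eq_fract numeral_poly)
qed (fact X_over_one_plus_X_square_in_dress_min
    X_square_minus_one_over_one_plus_X_square_in_dress_min)+

lemma Fract_add_mult_Fract_common_denominator:
  fixes x y r c w :: "'a::idom"
  assumes "c \<noteq> 0" "w \<noteq> 0"
  shows "Fract x c + Fract y c * Fract r w = Fract (x * w + y * r) (c * w)"
  using assms by (simp add: eq_fract algebra_simps)

lemma witness_plus_multiple_not_unit:
  assumes "z \<in> dress_min"
  shows "\<not> unit_in dress_min (X / (1 + X\<^sup>2) + (X\<^sup>2 - 1) / (1 + X\<^sup>2) * z)"
proof
  obtain r w where z: "z = Fract r w" and w: "\<forall>x. poly w x \<noteq> 0"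
    using dress_min_pole_free[OF assms] unfolding pole_free_def by blast
  then have "w \<noteq> 0" by (metis poly_0)
  define n where "n = [:0, 1:] * w + [:-1, 0, 1:] * r"
  define d where "d = [:1, 0, 1:] * w"
  have "X / (1 + X\<^sup>2) + (X\<^sup>2 - 1) / (1 + X\<^sup>2) * z = Fract n d"
    unfolding z n_def d_def X_over_one_plus_X_square X_square_minus_one_over_one_plus_X_square
    by (rule Fract_add_mult_Fract_common_denominator) (simp_all add: \<open>w \<noteq> 0\<close>)
  moreover assume "unit_in dress_min (X / (1 + X\<^sup>2) + (X\<^sup>2 - 1) / (1 + X\<^sup>2) * z)"
  ultimately have unit: "unit_in dress_min (Fract n d)" by simp
  have d: "poly d (-1) \<noteq> 0" "poly d 1 \<noteq> 0"
    using w by (simp_all add: d_def)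
  then have "d \<noteq> 0" by (metis poly_0)
  have "0 < poly (n * d) (-1) * poly (n * d) 1"
    by (rule dress_min_unit_sign_constant[OF unit \<open>d \<noteq> 0\<close> d])
  moreover have "poly (n * d) (-1) = - 2 * (poly w (-1))\<^sup>2" "poly (n * d) 1 = 2 * (poly w 1)\<^sup>2"
    by (simp_all add: n_def d_def power2_eq_square)
  then have "poly (n * d) (-1) \<le> 0" "0 \<le> poly (n * d) 1"
    by simp_all
  ultimately show False
    using mult_nonpos_nonneg by (metis not_le)
qed

theorem mainTheorem10:
  shows "(\<forall>a\<in>dress_min. \<forall>b\<in>dress_min.
            ideal2 dress_min a b = dress_min \<longrightarrow> unit_in dress_min (a\<^sup>2 + b\<^sup>2))
       \<and> (let a = X / (1 + X\<^sup>2); b = (X\<^sup>2 - 1) / (1 + X\<^sup>2) in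
            a \<in> dress_min \<and> b \<in> dress_min \<and> ideal2 dress_min a b = dress_min \<and>
            (\<forall>z\<in>dress_min. \<not> unit_in dress_min (a + b * z)))"
  unfolding Let_def
  using dress_min_unimodular_sum_squares_unit X_over_one_plus_X_square_in_dress_min
    X_square_minus_one_over_one_plus_X_square_in_dress_min witness_ideal2_eq_dress_min
    witness_plus_multiple_not_unit
  by blast

end
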